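(* Let $p$ be an odd prime and $r$ an integer with $p \nmid r$. Let $$f_{r,p}(x) = \frac{1}{2\sqrt{2}}\left((1+\sqrt{2})^r (x+\sqrt{2})^p - (1-\sqrt{2})^r (x - \sqrt{2})^p\right) \in \mathbb{Z}[x].$$ Then $f_{r,p}$ has $p$ distinct roots $\rho_0, \dots, \rho_{p-1}$ given by $$\rho_i = \sqrt{2} + \frac{2\sqrt{2}}{(-1)^r (1+\sqrt{2})^{-2r/p} \zeta_p^i - 1}, \quad 0 \leq i \leq p-1,$$ where $\zeta_p = e^{2\pi i/p}$ and $(1+\sqrt{2})^{-2r/p}$ denotes the positive real value. The only real root is $\rho_0$. *)

theory Defs
  imports "HOL-Analysis.Analysis" "HOL-Computational_Algebra.Polynomial"
begin

definition frp :: "int \<Rightarrow> nat \<Rightarrow> complex poly" where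
  "frp r p = smult (1 / (2 * complex_of_real (sqrt 2)))
     (smult (complex_of_real ((1 + sqrt 2) powi r)) ([:complex_of_real (sqrt 2), 1:] ^ p)
    - smult (complex_of_real ((1 - sqrt 2) powi r)) ([:- complex_of_real (sqrt 2), 1:] ^ p))"

definition zeta :: "nat \<Rightarrow> complex" where
  "zeta p = exp (2 * complex_of_real pi * \<i> / of_nat p)"

definition rho :: "int \<Rightarrow> nat \<Rightarrow> nat \<Rightarrow> complex" where
  "rho r p i = complex_of_real (sqrt 2) + 2 * complex_of_real (sqrt 2) /
     ((-1) powi r * complex_of_real ((1 + sqrt 2) powr (- 2 * of_int r / of_nat p)) * zeta p ^ i - 1)"

end

theory Submission
  imports Defs
begin

text \<open>
  Write S = sqrt 2, A = (1 + sqrt 2)^r and B = (1 - sqrt 2)^r. Then f(z) = 0 iff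
  A (z + S)^p = B (z - S)^p. Since (1 + sqrt 2)(1 - sqrt 2) = -1, the ratio B / A is c^p for the
  real number c = (-1)^r (1 + sqrt 2)^(-2r/p), and |c| \<noteq> 1 because r \<noteq> 0. So the roots are
  the z \<noteq> S with (z + S) / (z - S) = c zeta^i, and inverting this Moebius map gives rho_i.
  They are distinct because the zeta^i are, and rho_i is real iff zeta^i is, i.e. iff i = 0,
  as p is odd. For integrality, the n-th coefficient is
  (p choose n) (A S^(p-n) - B (-S)^(p-n)) / (2 S), and the two products are conjugates
  u + v sqrt 2 and u - v sqrt 2 in Z[sqrt 2], so their difference is 2 v sqrt 2.
\<close>

definition sqrt2_conj :: "real \<Rightarrow> real \<Rightarrow> bool" where
  "sqrt2_conj x y \<longleftrightarrow>
     (\<exists>u v :: int. x = of_int u + of_int v * sqrt 2 \<and> y = of_int u - of_int v * sqrt 2)"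

lemma sqrt2_conj_mult:
  assumes "sqrt2_conj x y" "sqrt2_conj x' y'"
  shows "sqrt2_conj (x * x') (y * y')"
proof -
  obtain u v u' v' :: int where xy: "x = u + v * sqrt 2" "y = u - v * sqrt 2"
    "x' = u' + v' * sqrt 2" "y' = u' - v' * sqrt 2"
    using assms unfolding sqrt2_conj_def by blast
  have "x * x' = (u * u' + 2 * v * v') + (u * v' + v * u') * sqrt 2"
       "y * y' = (u * u' + 2 * v * v') - (u * v' + v * u') * sqrt 2"
    unfolding xy by (simp_all add: algebra_simps)
  then show ?thesis
    unfolding sqrt2_conj_def by blast
qed

lemma sqrt2_conj_power: "sqrt2_conj x y \<Longrightarrow> sqrt2_conj (x ^ n) (y ^ n)"
proof (induction n)
  case 0
  show ?case unfolding sqrt2_conj_def by (rule exI[of _ 1], rule exI[of _ 0]) simp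
next
  case (Suc n)
  then show ?case using sqrt2_conj_mult by simp
qed

lemma sqrt2_conj_sqrt2_power: "sqrt2_conj (sqrt 2 ^ n) ((- sqrt 2) ^ n)"
proof (rule sqrt2_conj_power)
  show "sqrt2_conj (sqrt 2) (- sqrt 2)"
    unfolding sqrt2_conj_def by (rule exI[of _ 0], rule exI[of _ 1]) simp
qed

lemma sqrt2_conj_unit_powi: "sqrt2_conj ((1 + sqrt 2) powi r) ((1 - sqrt 2) powi r)"
proof (cases r rule: int_cases4)
  case (nonneg n)
  have "sqrt2_conj (1 + sqrt 2) (1 - sqrt 2)"
    unfolding sqrt2_conj_def by (auto intro!: exI[of _ 1])
  then show ?thesis using sqrt2_conj_power nonneg by simp
next
  case (neg n)
  have "inverse (1 + sqrt 2) = sqrt 2 - 1" "inverse (1 - sqrt 2) = - 1 - sqrt 2"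
    by (rule inverse_unique, simp add: algebra_simps)+
  moreover have "sqrt2_conj (sqrt 2 - 1) (- 1 - sqrt 2)"
    unfolding sqrt2_conj_def by (rule exI[of _ "-1"], rule exI[of _ 1]) simp
  ultimately show ?thesis
    using sqrt2_conj_power neg by (simp add: power_int_minus flip: power_inverse)
qed

lemma sqrt2_conj_diff: "sqrt2_conj x y \<Longrightarrow> \<exists>k :: int. x - y = 2 * sqrt 2 * k"
  unfolding sqrt2_conj_def by auto

lemma coeff_frp:
  "coeff (frp r p) n = (if n \<le> p then complex_of_real (real (p choose n)
     * ((1 + sqrt 2) powi r * sqrt 2 ^ (p - n) - (1 - sqrt 2) powi r * (- sqrt 2) ^ (p - n))
     / (2 * sqrt 2)) else 0)"
  unfolding frp_def
  by (auto simp: coeff_linear_poly_power coeff_eq_0 degree_linear_power algebra_simps diff_divide_distrib)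

lemma coeff_frp_Ints: "coeff (frp r p) n \<in> \<int>"
proof (cases "n \<le> p")
  case True
  have "sqrt2_conj ((1 + sqrt 2) powi r * sqrt 2 ^ (p - n)) ((1 - sqrt 2) powi r * (- sqrt 2) ^ (p - n))"
    by (intro sqrt2_conj_mult sqrt2_conj_unit_powi sqrt2_conj_sqrt2_power)
  then obtain k :: int
    where "(1 + sqrt 2) powi r * sqrt 2 ^ (p - n) - (1 - sqrt 2) powi r * (- sqrt 2) ^ (p - n)
           = 2 * sqrt 2 * k"
    using sqrt2_conj_diff by blast
  then have "coeff (frp r p) n = of_int (int (p choose n) * k)"
    using True by (simp add: coeff_frp)
  then show ?thesis by simp
qed (simp add: coeff_frp)

lemma poly_frp:
  "poly (frp r p) z = (complex_of_real ((1 + sqrt 2) powi r) * (z + sqrt 2) ^ p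
     - complex_of_real ((1 - sqrt 2) powi r) * (z - sqrt 2) ^ p) / (2 * sqrt 2)"
  unfolding frp_def by (simp add: algebra_simps diff_divide_distrib)

lemma zeta_power: "zeta p ^ j = exp (2 * of_real pi * \<i> * of_nat j / of_nat p)"
  unfolding zeta_def by (simp add: exp_of_nat_mult[symmetric] field_simps)

lemma norm_zeta_power [simp]: "norm (zeta p ^ j) = 1"
  unfolding zeta_power by simp

lemma zeta_power_eq_iff:
  "p > 0 \<Longrightarrow> i < p \<Longrightarrow> j < p \<Longrightarrow> zeta p ^ i = zeta p ^ j \<longleftrightarrow> i = j"
  unfolding zeta_power by (simp add: complex_root_unity_eq)

lemma zeta_power_power: "p > 0 \<Longrightarrow> (zeta p ^ j) ^ p = 1"
proof -
  assume "p > 0"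
  then have "zeta p ^ p = 1" unfolding zeta_power by simp
  then show ?thesis by (metis mult.commute power_mult power_one)
qed

lemma roots_unity_zeta_power:
  "p > 0 \<Longrightarrow> {v. v ^ p = 1} = (\<lambda>j. zeta p ^ j) ` {0..<p}"
  unfolding zeta_power
  by (simp add: complex_roots_unity setcompr_eq_image atLeast0LessThan lessThan_def Suc_le_eq)

lemma zeta_power_in_Reals_iff:
  assumes "odd p" "i < p"
  shows "zeta p ^ i \<in> \<real> \<longleftrightarrow> i = 0"
proof
  assume "zeta p ^ i \<in> \<real>"
  then have "sin (2 * pi * i / p) = 0"
    unfolding zeta_power by (simp add: complex_is_Real_iff Im_exp)
  then obtain k :: int where "2 * pi * i / p = k * pi"
    using sin_zero_iff_int2 by blast
  moreover have "p > 0" using assms(1) by (simp add: odd_pos)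
  ultimately have "pi * (2 * i) = pi * (k * p)" by (simp add: field_simps)
  then have "real_of_int (int (2 * i)) = real_of_int (k * int p)"
    by simp
  then have "int p dvd int (2 * i)"
    by (metis dvd_triv_right of_int_eq_iff)
  then have "p dvd i"
    using assms(1) by (simp add: coprime_dvd_mult_right_iff)
  then show "i = 0"
    using assms(2) by (auto simp: nat_dvd_not_less)
qed simp

lemma moebius_inverse_iff:
  fixes S w z :: "'a :: field_char_0"
  assumes "S \<noteq> 0" "w \<noteq> 1"
  shows "z = S + 2 * S / (w - 1) \<longleftrightarrow> z \<noteq> S \<and> w = (z + S) / (z - S)"
proof
  assume z: "z = S + 2 * S / (w - 1)"
  have "w - 1 \<noteq> 0" using assms by simp
  then have "z - S \<noteq> 0" using z assms by simp
  moreover have "z + S = w * (z - S)" using z \<open>w - 1 \<noteq> 0\<close> by (simp add: field_simps)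
  ultimately show "z \<noteq> S \<and> w = (z + S) / (z - S)" by (simp add: eq_divide_eq)
next
  assume z: "z \<noteq> S \<and> w = (z + S) / (z - S)"
  then have "w - 1 = 2 * S / (z - S)" by (simp add: field_simps)
  then show "z = S + 2 * S / (w - 1)" using assms(1) z by simp
qed

lemma scaled_zeta_power_neq_1:
  assumes "norm c \<noteq> 1"
  shows "c * zeta p ^ j \<noteq> 1"
proof
  assume "c * zeta p ^ j = 1"
  then have "norm (c * zeta p ^ j) = 1" by simp
  then show False using assms by (simp add: norm_mult)
qed

lemma roots_power_eq_scaled_power:
  fixes S c :: complex
  assumes S: "S \<noteq> 0" and c: "c \<noteq> 0" "norm c \<noteq> 1" and p: "p > 0"
  shows "{z. (z + S) ^ p = c ^ p * (z - S) ^ p}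
    = (\<lambda>j. S + 2 * S / (c * zeta p ^ j - 1)) ` {0..<p}"
proof -
  note w_neq_1 = scaled_zeta_power_neq_1[OF c(2)]
  have "(z + S) ^ p = c ^ p * (z - S) ^ p \<longleftrightarrow> (\<exists>j<p. z = S + 2 * S / (c * zeta p ^ j - 1))" for z
  proof
    assume eq: "(z + S) ^ p = c ^ p * (z - S) ^ p"
    have "z \<noteq> S"
    proof
      assume "z = S"
      then have "(z + S) ^ p = 0" using eq p by simp
      then show False using \<open>z = S\<close> S by simp
    qed
    define v where "v = (z + S) / (z - S)"
    have "v ^ p = c ^ p" using eq \<open>z \<noteq> S\<close> by (simp add: v_def power_divide)
    then have "(v / c) ^ p = 1" using c by (simp add: power_divide)
    then have "v / c \<in> (\<lambda>j. zeta p ^ j) ` {0..<p}"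
      using roots_unity_zeta_power[OF p] by blast
    then obtain j where "j < p" "v / c = zeta p ^ j" by auto
    then have "v = c * zeta p ^ j" using c by (simp add: field_simps)
    then have "z = S + 2 * S / (c * zeta p ^ j - 1)"
      using moebius_inverse_iff[OF S w_neq_1] \<open>z \<noteq> S\<close> v_def by blast
    then show "\<exists>j<p. z = S + 2 * S / (c * zeta p ^ j - 1)" using \<open>j < p\<close> by blast
  next
    assume "\<exists>j<p. z = S + 2 * S / (c * zeta p ^ j - 1)"
    then obtain j where "z = S + 2 * S / (c * zeta p ^ j - 1)" by blast
    then have "z \<noteq> S" "c * zeta p ^ j = (z + S) / (z - S)"
      using moebius_inverse_iff[OF S w_neq_1] by blast+
    then have "z + S = c * zeta p ^ j * (z - S)" by simp
    then show "(z + S) ^ p = c ^ p * (z - S) ^ p"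
      using p by (simp add: power_mult_distrib zeta_power_power)
  qed
  then show ?thesis by (auto simp: image_iff)
qed

lemma inj_on_moebius_zeta_power:
  fixes S c :: complex
  assumes S: "S \<noteq> 0" and c: "c \<noteq> 0" "norm c \<noteq> 1" and p: "p > 0"
  shows "inj_on (\<lambda>j. S + 2 * S / (c * zeta p ^ j - 1)) {0..<p}"
proof (rule inj_onI)
  fix i j
  assume ij: "i \<in> {0..<p}" "j \<in> {0..<p}"
    and eq: "S + 2 * S / (c * zeta p ^ i - 1) = S + 2 * S / (c * zeta p ^ j - 1)"
  have "c * zeta p ^ i = c * zeta p ^ j"
    using eq moebius_inverse_iff[OF S scaled_zeta_power_neq_1[OF c(2)]] by metis
  then show "i = j" using c ij p by (simp add: zeta_power_eq_iff)
qed

lemma moebius_zeta_power_in_Reals_iff: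
  fixes S c :: real
  assumes "S \<noteq> 0" "c \<noteq> 0" "\<bar>c\<bar> \<noteq> 1"
  shows "of_real S + 2 * of_real S / (of_real c * zeta p ^ j - 1) \<in> \<real>
    \<longleftrightarrow> zeta p ^ j \<in> \<real>"
proof
  let ?z = "of_real S + 2 * of_real S / (of_real c * zeta p ^ j - 1)"
  assume "?z \<in> \<real>"
  have "of_real c * zeta p ^ j \<noteq> 1" using assms(3) by (intro scaled_zeta_power_neq_1) simp
  then have "of_real c * zeta p ^ j = (?z + of_real S) / (?z - of_real S)"
    using moebius_inverse_iff[of "of_real S" "of_real c * zeta p ^ j" ?z] assms(1) by simp
  also have "\<dots> \<in> \<real>"
  proof (rule Reals_divide)
    show "?z + of_real S \<in> \<real>" using \<open>?z \<in> \<real>\<close> by (rule Reals_add) simp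
    show "?z - of_real S \<in> \<real>" using \<open>?z \<in> \<real>\<close> by (rule Reals_diff) simp
  qed
  finally have "of_real c * zeta p ^ j / of_real c \<in> \<real>" by (rule Reals_divide) simp
  then show "zeta p ^ j \<in> \<real>" using assms(2) by simp
next
  assume "zeta p ^ j \<in> \<real>"
  then show "of_real S + 2 * of_real S / (of_real c * zeta p ^ j - 1) \<in> \<real>" by simp
qed

definition rho_scale :: "int \<Rightarrow> nat \<Rightarrow> real" where
  "rho_scale r p = (-1) powi r * (1 + sqrt 2) powr (- 2 * of_int r / of_nat p)"

lemma rho_altdef:
  "rho r p = (\<lambda>i. complex_of_real (sqrt 2)
     + 2 * complex_of_real (sqrt 2) / (complex_of_real (rho_scale r p) * zeta p ^ i - 1))"
  unfolding rho_def rho_scale_def by (simp add: fun_eq_iff)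

lemma abs_rho_scale: "\<bar>rho_scale r p\<bar> = (1 + sqrt 2) powr (- 2 * of_int r / of_nat p)"
  unfolding rho_scale_def by (simp add: abs_mult power_int_abs)

lemma rho_scale_nonzero: "rho_scale r p \<noteq> 0"
proof -
  have "1 + sqrt 2 > (0::real)" by (simp add: add_pos_nonneg)
  then show ?thesis using abs_rho_scale[of r p] by auto
qed

lemma abs_rho_scale_neq_1: "p > 0 \<Longrightarrow> r \<noteq> 0 \<Longrightarrow> \<bar>rho_scale r p\<bar> \<noteq> 1"
  unfolding abs_rho_scale by simp

lemma neg_one_powi_odd_power: "odd p \<Longrightarrow> ((-1::real) powi r) ^ p = (-1) powi r"
proof -
  assume "odd p"
  then obtain k where p: "p = 2 * k + 1" using oddE by blast
  have "((-1::real) powi r) ^ 2 = 1"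
    by (simp add: power_int_power' power_int_power[symmetric] mult.commute[of r])
  then show ?thesis by (simp add: p power_mult)
qed

lemma rho_scale_power:
  assumes "odd p"
  shows "rho_scale r p ^ p * (1 + sqrt 2) powi r = (1 - sqrt 2) powi r"
proof -
  define t where "t = 1 + sqrt 2"
  have "t > 0" unfolding t_def by (simp add: add_pos_nonneg)
  have "p > 0" using assms by (simp add: odd_pos)
  have "(t powr (- 2 * of_int r / of_nat p)) ^ p = t powr (of_nat p * (- 2 * of_int r / of_nat p))"
    using \<open>t > 0\<close> by (simp add: powr_power)
  also have "\<dots> = t powr of_int (- 2 * r)" using \<open>p > 0\<close> by simp
  also have "\<dots> = t powi (- 2 * r)" by (rule powr_real_of_int') (use \<open>t > 0\<close> in auto)
  finally have "rho_scale r p ^ p * t powi r = (-1) powi r * (t powi (- 2 * r) * t powi r)"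
    unfolding rho_scale_def t_def power_mult_distrib neg_one_powi_odd_power[OF assms] by simp
  also have "t powi (- 2 * r) * t powi r = t powi (- r)"
    using \<open>t > 0\<close> by (simp flip: power_int_add)
  also have "(-1) powi r * t powi (- r) = (- inverse t) powi r"
    by (metis mult_minus1 power_int_mult_distrib power_int_inverse power_int_minus)
  also have "inverse t = sqrt 2 - 1"
    by (rule inverse_unique) (simp add: t_def algebra_simps)
  finally show ?thesis unfolding t_def by simp
qed

lemma poly_frp_eq_0_iff:
  assumes "odd p"
  shows "poly (frp r p) z = 0 \<longleftrightarrow>
    (z + sqrt 2) ^ p = complex_of_real (rho_scale r p) ^ p * (z - sqrt 2) ^ p"
proof -
  have "poly (frp r p) z = complex_of_real ((1 + sqrt 2) powi r)
      * ((z + sqrt 2) ^ p - complex_of_real (rho_scale r p) ^ p * (z - sqrt 2) ^ p) / (2 * sqrt 2)"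
    unfolding poly_frp rho_scale_power[OF assms, symmetric] by (simp add: algebra_simps)
  moreover have "complex_of_real (1 + sqrt 2) \<noteq> 0"
    using add_pos_nonneg[of 1 "sqrt 2"] by (simp only: of_real_eq_0_iff) simp
  then have "1 + complex_of_real (sqrt 2) \<noteq> 0" by simp
  ultimately show ?thesis by simp
qed

lemma roots_frp:
  assumes "odd p" "r \<noteq> 0"
  shows "{z. poly (frp r p) z = 0} = rho r p ` {0..<p}"
proof -
  have "p > 0" using assms(1) by (simp add: odd_pos)
  then show ?thesis
    unfolding poly_frp_eq_0_iff[OF assms(1)] rho_altdef
    using rho_scale_nonzero abs_rho_scale_neq_1[OF _ assms(2)]
    by (intro roots_power_eq_scaled_power) simp_all
qed

lemma frp_nonzero:
  assumes "odd p" "r \<noteq> 0"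
  shows "frp r p \<noteq> 0"
proof
  assume "frp r p = 0"
  then have "UNIV = rho r p ` {0..<p}" using roots_frp[OF assms] by auto
  then show False using infinite_UNIV_char_0 by (metis finite_atLeastLessThan finite_imageI)
qed

lemma inj_on_rho:
  assumes "p > 0" "r \<noteq> 0"
  shows "inj_on (rho r p) {0..<p}"
  unfolding rho_altdef using rho_scale_nonzero abs_rho_scale_neq_1[OF assms]
  by (intro inj_on_moebius_zeta_power assms(1)) simp_all

lemma rho_in_Reals_iff:
  assumes "odd p" "r \<noteq> 0" "i < p"
  shows "rho r p i \<in> \<real> \<longleftrightarrow> i = 0"
proof -
  have "p > 0" using assms(1) by (simp add: odd_pos)
  then have "rho r p i \<in> \<real> \<longleftrightarrow> zeta p ^ i \<in> \<real>"
    unfolding rho_altdef using rho_scale_nonzero abs_rho_scale_neq_1[OF _ assms(2)]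
    by (intro moebius_zeta_power_in_Reals_iff) simp_all
  also have "\<dots> \<longleftrightarrow> i = 0" using assms(1,3) by (rule zeta_power_in_Reals_iff)
  finally show ?thesis .
qed

theorem theorem4p1:
  fixes p :: nat and r :: int
  assumes "prime p" and "odd p" and "\<not> int p dvd r"
  shows "(\<forall>n. coeff (frp r p) n \<in> \<int>)
    \<and> frp r p \<noteq> 0
    \<and> {z. poly (frp r p) z = 0} = rho r p ` {0..<p}
    \<and> inj_on (rho r p) {0..<p}
    \<and> (\<forall>i<p. rho r p i \<in> \<real> \<longleftrightarrow> i = 0)"
proof -
  have "r \<noteq> 0" using assms(3) by auto
  moreover have "p > 0" using assms(2) by (simp add: odd_pos)
  ultimately show ?thesis
    using assms(2) by (simp add: coeff_frp_Ints frp_nonzero roots_frp inj_on_rho rho_in_Reals_iff)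
qed

end
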